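(* Let $V$ be a complex vector space of finite dimension $N$ and let $(R,F)$ be a couple of compatible braidings on $V\otimes V$. Put $\mathcal{R}=R\,F$. Then for any $N\times N$ matrix $A$ (with entries in $\mathbb{C}$ or in any associative $\mathbb{C}$-algebra, the braidings acting on the numerical tensor factors) $$\mathcal{R}_{12}\,A_{\overline 3}=A_{\overline 3}\,\mathcal{R}_{12},$$ where $\mathcal{R}_{12}=R_{12}F_{12}$ and $A_{\overline 3}=F_{23}F_{12}A_1F_{12}^{-1}F_{23}^{-1}$.
   Context: A braiding is an invertible operator $R\in\mathrm{End}(V\otimes V)$ satisfying $(R\otimes I)(I\otimes R)(R\otimes I)=(I\otimes R)(R\otimes I)(I\otimes R)$. In $\mathrm{End}(V^{\otimes 3})$, $X_{12}=X\otimes I$, $X_{23}=I\otimes X$ for $X\in\mathrm{End}(V\otimes V)$, and $A_1=A\otimes I\otimes I$ for an $N\times N$ matrix $A$. Braidings $R,F$ are compatible if $R_{12}F_{23}F_{12}=F_{23}F_{12}R_{23}$ and $R_{23}F_{12}F_{23}=F_{12}F_{23}R_{12}$. *)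

theory Defs
  imports "HOL-Analysis.Analysis"
begin

text \<open>V = C^N with basis indexed by the finite type 'n (N = CARD('n)).
  Endomorphisms of V (x) V are matrices indexed by 'n \<times> 'n; of V (x) V (x) V
  by 'n \<times> 'n \<times> 'n, the basis vector e_i (x) e_j (x) e_k being (i,j,k).\<close>

definition leg12 :: "'a::semiring_1 ^('n::finite \<times> 'n)^('n \<times> 'n) \<Rightarrow> 'a ^('n \<times> 'n \<times> 'n)^('n \<times> 'n \<times> 'n)" where
  "leg12 X = (\<chi> p q. X $ (fst p, fst (snd p)) $ (fst q, fst (snd q)) * (if snd (snd p) = snd (snd q) then 1 else 0))"

definition leg23 :: "'a::semiring_1 ^('n::finite \<times> 'n)^('n \<times> 'n) \<Rightarrow> 'a ^('n \<times> 'n \<times> 'n)^('n \<times> 'n \<times> 'n)" where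
  "leg23 X = (\<chi> p q. (if fst p = fst q then 1 else 0) * X $ snd p $ snd q)"

definition leg1 :: "'a::semiring_1 ^'n::finite^'n \<Rightarrow> 'a ^('n \<times> 'n \<times> 'n)^('n \<times> 'n \<times> 'n)" where
  "leg1 A = (\<chi> p q. A $ fst p $ fst q * (if snd p = snd q then 1 else 0))"

definition map_mat :: "('a \<Rightarrow> 'b) \<Rightarrow> 'a^'m::finite^'k::finite \<Rightarrow> 'b^'m^'k" where
  "map_mat h M = (\<chi> i j. h (M $ i $ j))"

definition braiding :: "complex ^('n::finite \<times> 'n)^('n \<times> 'n) \<Rightarrow> bool" where
  "braiding R \<longleftrightarrow> invertible R \<and>
     leg12 R ** leg23 R ** leg12 R = leg23 R ** leg12 R ** leg23 R"

definition compatible :: "complex ^('n::finite \<times> 'n)^('n \<times> 'n) \<Rightarrow> complex ^('n \<times> 'n)^('n \<times> 'n) \<Rightarrow> bool" where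
  "compatible R F \<longleftrightarrow>
     leg12 R ** leg23 F ** leg12 F = leg23 F ** leg12 F ** leg23 R \<and>
     leg23 R ** leg12 F ** leg23 F = leg12 F ** leg23 F ** leg12 R"

text \<open>An associative unital C-algebra: a ring 'a with a unital ring homomorphism
  h : C -> 'a whose image is central (scalar multiplication c \<cdot> x = h c * x).\<close>
definition calg_hom :: "(complex \<Rightarrow> 'a::ring_1) \<Rightarrow> bool" where
  "calg_hom h \<longleftrightarrow> h 1 = 1 \<and> (\<forall>x y. h (x + y) = h x + h y) \<and>
     (\<forall>x y. h (x * y) = h x * h y) \<and> (\<forall>c a. h c * a = a * h c)"

end

theory Submission
  imports Defs
begin

text \<open>Let \<open>P = F\<^sub>2\<^sub>3 F\<^sub>1\<^sub>2\<close>. The braid relation for \<open>F\<close> and the first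
  compatibility relation give
  \<open>(RF)\<^sub>1\<^sub>2 P = R\<^sub>1\<^sub>2 F\<^sub>2\<^sub>3 F\<^sub>1\<^sub>2 F\<^sub>2\<^sub>3 = F\<^sub>2\<^sub>3 F\<^sub>1\<^sub>2 R\<^sub>2\<^sub>3 F\<^sub>2\<^sub>3 = P (RF)\<^sub>2\<^sub>3\<close>.
  The matrix \<open>(RF)\<^sub>2\<^sub>3\<close> acts on other tensor factors than \<open>A\<^sub>1\<close> and has central
  scalar entries, so it commutes with \<open>A\<^sub>1\<close>; conjugating by \<open>P\<close>, the matrix
  \<open>(RF)\<^sub>1\<^sub>2 = P (RF)\<^sub>2\<^sub>3 P\<^sup>-\<^sup>1\<close> commutes with \<open>P A\<^sub>1 P\<^sup>-\<^sup>1\<close>.\<close>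

lemma invertible_matrix_inv:
  assumes "invertible M"
  shows "M ** matrix_inv M = mat 1" and "matrix_inv M ** M = mat 1"
  using someI_ex[OF assms[unfolded invertible_def]] unfolding matrix_inv_def by blast+

lemma commute_conjugate:
  fixes X :: "'a::semiring_1^'m::finite^'m"
  assumes "P ** Q = mat 1" and "Q ** P = mat 1"
    and "X ** P = P ** Y" and "Y ** B = B ** Y"
  shows "X ** (P ** B ** Q) = (P ** B ** Q) ** X"
proof -
  have YQ: "Y ** Q = Q ** X"
  proof -
    have "Y ** Q = (Q ** P) ** Y ** Q"
      using assms(2) by simp
    also have "\<dots> = Q ** (X ** P) ** Q"
      using assms(3) by (simp add: matrix_mul_assoc)
    also have "\<dots> = Q ** X ** (P ** Q)"
      by (simp add: matrix_mul_assoc)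
    finally show ?thesis
      using assms(1) by simp
  qed
  have "X ** (P ** B ** Q) = P ** (Y ** B) ** Q"
    using assms(3) by (simp add: matrix_mul_assoc)
  also have "\<dots> = P ** B ** (Y ** Q)"
    using assms(4) by (simp add: matrix_mul_assoc)
  also have "\<dots> = (P ** B ** Q) ** X"
    using YQ by (simp add: matrix_mul_assoc)
  finally show ?thesis .
qed

lemma sum_UNIV_prod2:
  "sum (f :: 'n::finite \<times> 'n \<Rightarrow> 'a::comm_monoid_add) UNIV = (\<Sum>a\<in>UNIV. \<Sum>b\<in>UNIV. f (a, b))"
  by (simp add: sum.cartesian_product UNIV_Times_UNIV[symmetric] del: UNIV_Times_UNIV)

lemma sum_UNIV_prod3:
  "sum (f :: 'n::finite \<times> 'n \<times> 'n \<Rightarrow> 'a::comm_monoid_add) UNIV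
     = (\<Sum>a\<in>UNIV. \<Sum>b\<in>UNIV. \<Sum>c\<in>UNIV. f (a, b, c))"
  by (simp add: sum.cartesian_product UNIV_Times_UNIV[symmetric] del: UNIV_Times_UNIV)

lemma sum_if_const: "(\<Sum>x\<in>S. if P then f x else 0) = (if P then sum f S else 0)"
  by simp

lemma leg12_mult: "leg12 (X ** Y) = leg12 X ** (leg12 Y :: 'a::semiring_1^_^_)"
  unfolding leg12_def matrix_matrix_mult_def
  by (simp add: vec_eq_iff sum_UNIV_prod3 sum_UNIV_prod2 sum_distrib_right)
    (auto simp: if_distrib if_distribR sum.delta sum.delta' cong: if_cong)

lemma leg23_mult: "leg23 (X ** Y) = leg23 X ** (leg23 Y :: 'a::semiring_1^_^_)"
  unfolding leg23_def matrix_matrix_mult_def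
  by (simp add: vec_eq_iff sum_UNIV_prod3 sum_UNIV_prod2 sum_distrib_left)
    (auto simp: if_distrib if_distribR sum_if_const sum.delta cong: if_cong)

lemma leg12_mat_1: "leg12 (mat 1) = (mat 1 :: 'a::semiring_1^_^_)"
  unfolding leg12_def mat_def by (auto simp: vec_eq_iff prod_eq_iff)

lemma leg23_mat_1: "leg23 (mat 1) = (mat 1 :: 'a::semiring_1^_^_)"
  unfolding leg23_def mat_def by (auto simp: vec_eq_iff prod_eq_iff)

lemma leg23_commute_leg1:
  fixes X :: "'a::semiring_1^('n::finite \<times> 'n)^('n \<times> 'n)" and A :: "'a^'n^'n"
  assumes "\<And>i j k l. X $ i $ j * A $ k $ l = A $ k $ l * X $ i $ j"
  shows "leg23 X ** leg1 A = leg1 A ** leg23 X"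
proof -
  have "(leg23 X ** leg1 A) $ p $ r = X $ snd p $ snd r * A $ fst p $ fst r" for p r
  proof -
    have "(leg23 X ** leg1 A) $ p $ r
        = (\<Sum>q\<in>UNIV. if q = (fst p, snd r) then X $ snd p $ snd r * A $ fst p $ fst r else 0)"
      unfolding leg23_def leg1_def matrix_matrix_mult_def vec_lambda_beta
      by (intro sum.cong) auto
    then show ?thesis by simp
  qed
  moreover have "(leg1 A ** leg23 X) $ p $ r = A $ fst p $ fst r * X $ snd p $ snd r" for p r
  proof -
    have "(leg1 A ** leg23 X) $ p $ r
        = (\<Sum>q\<in>UNIV. if q = (fst r, snd p) then A $ fst p $ fst r * X $ snd p $ snd r else 0)"
      unfolding leg23_def leg1_def matrix_matrix_mult_def vec_lambda_beta
      by (intro sum.cong) auto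
    then show ?thesis by simp
  qed
  ultimately show ?thesis
    using assms by (simp add: vec_eq_iff)
qed

lemma leg_conjugator_inverse:
  fixes F G :: "'a::semiring_1^('n::finite \<times> 'n)^('n \<times> 'n)"
  assumes "F ** G = mat 1" and "G ** F = mat 1"
  shows "(leg23 F ** leg12 F) ** (leg12 G ** leg23 G) = mat 1"
    and "(leg12 G ** leg23 G) ** (leg23 F ** leg12 F) = mat 1"
proof -
  have "(leg23 F ** leg12 F) ** (leg12 G ** leg23 G) = leg23 F ** leg12 (F ** G) ** leg23 G"
    by (simp add: leg12_mult matrix_mul_assoc)
  then show "(leg23 F ** leg12 F) ** (leg12 G ** leg23 G) = mat 1"
    by (simp add: assms leg12_mat_1 leg23_mult[symmetric] leg23_mat_1)
  have "(leg12 G ** leg23 G) ** (leg23 F ** leg12 F) = leg12 G ** leg23 (G ** F) ** leg12 F"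
    by (simp add: leg23_mult matrix_mul_assoc)
  then show "(leg12 G ** leg23 G) ** (leg23 F ** leg12 F) = mat 1"
    by (simp add: assms leg23_mat_1 leg12_mult[symmetric] leg12_mat_1)
qed

lemma compatible_intertwines:
  assumes "braiding F" and "compatible R F"
  shows "leg12 (R ** F) ** (leg23 F ** leg12 F) = (leg23 F ** leg12 F) ** leg23 (R ** F)"
proof -
  have braid: "leg12 F ** leg23 F ** leg12 F = leg23 F ** leg12 F ** leg23 F"
    using assms(1) unfolding braiding_def by blast
  have compat: "leg12 R ** leg23 F ** leg12 F = leg23 F ** leg12 F ** leg23 R"
    using assms(2) unfolding compatible_def by blast
  have "leg12 (R ** F) ** (leg23 F ** leg12 F) = leg12 R ** (leg12 F ** leg23 F ** leg12 F)"
    by (simp add: leg12_mult matrix_mul_assoc)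
  also have "\<dots> = leg12 R ** leg23 F ** leg12 F ** leg23 F"
    by (simp add: braid matrix_mul_assoc)
  also have "\<dots> = leg23 F ** leg12 F ** leg23 R ** leg23 F"
    by (simp add: compat)
  also have "\<dots> = (leg23 F ** leg12 F) ** leg23 (R ** F)"
    by (simp add: leg23_mult matrix_mul_assoc)
  finally show ?thesis .
qed

lemma calg_hom_1: "calg_hom h \<Longrightarrow> h 1 = 1"
  and calg_hom_add: "calg_hom h \<Longrightarrow> h (x + y) = h x + h y"
  and calg_hom_mult: "calg_hom h \<Longrightarrow> h (x * y) = h x * h y"
  and calg_hom_commute: "calg_hom h \<Longrightarrow> h c * a = a * h c"
  unfolding calg_hom_def by blast+

lemma calg_hom_0: "calg_hom h \<Longrightarrow> h 0 = 0"
  using calg_hom_add[of h 0 0] by simp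

lemma calg_hom_sum: "calg_hom h \<Longrightarrow> h (sum f S) = (\<Sum>x\<in>S. h (f x))"
  by (induction S rule: infinite_finite_induct) (simp_all add: calg_hom_0 calg_hom_add)

lemma map_mat_mult: "calg_hom h \<Longrightarrow> map_mat h (X ** Y) = map_mat h X ** map_mat h Y"
  unfolding map_mat_def matrix_matrix_mult_def
  by (simp add: vec_eq_iff calg_hom_sum calg_hom_mult)

lemma map_mat_mat_1: "calg_hom h \<Longrightarrow> map_mat h (mat 1) = mat 1"
  unfolding map_mat_def mat_def by (simp add: vec_eq_iff calg_hom_0 calg_hom_1)

lemma map_mat_leg23: "calg_hom h \<Longrightarrow> map_mat h (leg23 X) = leg23 (map_mat h X)"
  unfolding map_mat_def leg23_def by (simp add: vec_eq_iff calg_hom_mult calg_hom_0 calg_hom_1)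

lemma map_mat_leg23_commute_leg1:
  "calg_hom h \<Longrightarrow> map_mat h (leg23 X) ** leg1 A = leg1 A ** map_mat h (leg23 X)"
  unfolding map_mat_leg23 by (rule leg23_commute_leg1) (simp add: map_mat_def calg_hom_commute)

theorem mainTheorem3:
  fixes R F :: "complex ^('n::finite \<times> 'n)^('n \<times> 'n)"
    and A :: "'a::ring_1 ^'n^'n"
    and h :: "complex \<Rightarrow> 'a"
  assumes "braiding R" and "braiding F" and "compatible R F"
    and "calg_hom h"
  shows "map_mat h (leg12 (R ** F)) **
           (map_mat h (leg23 F ** leg12 F) ** leg1 A **
            map_mat h (leg12 (matrix_inv F) ** leg23 (matrix_inv F)))
       = (map_mat h (leg23 F ** leg12 F) ** leg1 A **
            map_mat h (leg12 (matrix_inv F) ** leg23 (matrix_inv F)))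
         ** map_mat h (leg12 (R ** F))"
proof (rule commute_conjugate)
  have F_inv: "F ** matrix_inv F = mat 1" "matrix_inv F ** F = mat 1"
    using assms(2) invertible_matrix_inv unfolding braiding_def by blast+
  note map_mult = map_mat_mult[OF assms(4), symmetric]
  show "map_mat h (leg23 F ** leg12 F) ** map_mat h (leg12 (matrix_inv F) ** leg23 (matrix_inv F))
      = mat 1"
    "map_mat h (leg12 (matrix_inv F) ** leg23 (matrix_inv F)) ** map_mat h (leg23 F ** leg12 F)
      = mat 1"
    using leg_conjugator_inverse[OF F_inv]
    by (simp_all add: map_mult map_mat_mat_1 assms(4))
  show "map_mat h (leg12 (R ** F)) ** map_mat h (leg23 F ** leg12 F)
      = map_mat h (leg23 F ** leg12 F) ** map_mat h (leg23 (R ** F))"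
    by (simp add: map_mult compatible_intertwines assms(2,3))
  show "map_mat h (leg23 (R ** F)) ** leg1 A = leg1 A ** map_mat h (leg23 (R ** F))"
    by (rule map_mat_leg23_commute_leg1[OF assms(4)])
qed

end
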